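(* Let $K$ be a field of characteristic zero, $L$ a $K$-linear functional on $K[u]$ with moments $\mu_s=L(u^s)$, and assume that all Hankel determinants $H(n)=\det_{0\le i,j\le n-1}(\mu_{i+j})$, $n\ge0$, are non-zero. Let $k,m,n$ be non-negative integers and $x_1,\dots,x_m,y_1,\dots,y_k$ variables. Then the determinant $$\det_{0\le i,j\le n-1}\left(\int u^{i+j}\frac{\prod_{\ell=1}^m(u-x_\ell)}{\prod_{\ell=1}^k(u-y_\ell)}\,d\mu(u)\right)$$ does not vanish identically.
   Context: $\int f(u)\,d\mu(u)$ denotes $L(f)$; the factors $\frac1{u-y_\ell}$ are expanded as $-\sum_{i\ge0}u^iy_\ell^{-i-1}$ (formal power series in $1/y_\ell$) and $L$ is applied coefficientwise, so the determinant is a formal series in $x_1,\dots,x_m$ and $1/y_1,\dots,1/y_k$ (alternatively the integrals may be read analytically for a measure $d\mu$). *)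

theory Defs
  imports "HOL-Library.Poly_Mapping" "HOL-Computational_Algebra.Polynomial"
    "HOL-Combinatorics.Permutations" "Jordan_Normal_Form.Determinant"
begin

text \<open>Multivariate formal power series over a coefficient ring, given by their
 coefficient functions on monomials (finitely supported exponent vectors).
 Variables are of type nat + nat: Inl l stands for x_(l+1), Inr l stands for
 the variable 1/y_(l+1).\<close>

type_synonym ('v, 'a) mps = "('v \<Rightarrow>\<^sub>0 nat) \<Rightarrow> 'a"

definition mps_one :: "('v, 'a::comm_ring_1) mps" where
  "mps_one \<alpha> = (if \<alpha> = 0 then 1 else 0)"

definition mps_mult :: "('v, 'a::comm_ring_1) mps \<Rightarrow> ('v, 'a) mps \<Rightarrow> ('v, 'a) mps" where
  "mps_mult f g \<alpha> = (\<Sum>(\<beta>, \<gamma>) \<in> {(\<beta>, \<gamma>). \<beta> + \<gamma> = \<alpha>}. f \<beta> * g \<gamma>)"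

definition mps_prod_list :: "('v, 'a::comm_ring_1) mps list \<Rightarrow> ('v, 'a) mps" where
  "mps_prod_list fs = foldr mps_mult fs mps_one"

definition mps_det :: "nat \<Rightarrow> (nat \<Rightarrow> nat \<Rightarrow> ('v, 'a::comm_ring_1) mps) \<Rightarrow> ('v, 'a) mps" where
  "mps_det n A \<alpha> = (\<Sum>p \<in> {p. p permutes {..<n}}.
      of_int (sign p) * mps_prod_list (map (\<lambda>i. A i (p i)) [0..<n]) \<alpha>)"

definition Lfun :: "(nat \<Rightarrow> 'a::comm_ring_1) \<Rightarrow> 'a poly \<Rightarrow> 'a" where
  "Lfun \<mu> p = (\<Sum>s\<le>degree p. coeff p s * \<mu> s)"

text \<open>Factors of the integrand, as series in x, 1/y with coefficients in K[u].\<close>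
definition u_pow :: "nat \<Rightarrow> (nat + nat, 'a::comm_ring_1 poly) mps" where
  "u_pow s \<alpha> = (if \<alpha> = 0 then monom 1 s else 0)"

definition x_factor :: "nat \<Rightarrow> (nat + nat, 'a::comm_ring_1 poly) mps" where
  "x_factor l \<alpha> = (if \<alpha> = 0 then [:0, 1:]
      else if \<alpha> = Poly_Mapping.single (Inl l) 1 then -1 else 0)"

text \<open>1/(u - y_(l+1)) expanded as - sum_(i>=0) u^i y_(l+1)^(-i-1).\<close>
definition y_factor :: "nat \<Rightarrow> (nat + nat, 'a::comm_ring_1 poly) mps" where
  "y_factor l \<alpha> = (if \<exists>i. \<alpha> = Poly_Mapping.single (Inr l) (i + 1)
      then - monom 1 (Poly_Mapping.lookup \<alpha> (Inr l) - 1) else 0)"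

text \<open>The matrix entry: integral of u^(i+j) prod(u - x_l) / prod(u - y_l),
 with L applied coefficientwise.\<close>
definition entry :: "(nat \<Rightarrow> 'a::comm_ring_1) \<Rightarrow> nat \<Rightarrow> nat \<Rightarrow> nat \<Rightarrow> nat \<Rightarrow> (nat + nat, 'a) mps" where
  "entry \<mu> m k i j = (\<lambda>\<alpha>. Lfun \<mu> (mps_prod_list
      ([u_pow (i + j)] @ map x_factor [0..<m] @ map y_factor [0..<k]) \<alpha>))"

definition hankel :: "(nat \<Rightarrow> 'a::comm_ring_1) \<Rightarrow> nat \<Rightarrow> 'a" where
  "hankel \<mu> n = det (mat n n (\<lambda>(i, j). \<mu> (i + j)))"

end

theory Submission
  imports Defs
begin

text \<open>Read the entries as series in the variables x_l and 1/y_l. Each entry is supported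
 in the cone of monomials whose x-degrees are at most, and whose 1/y-degrees are at least,
 those of the corner monomial x_1...x_m / (y_1...y_k), and its coefficient there is
 (-1)^(m+k) mu_(i+j). Cones of this shape add under multiplication, and the coefficient of a
 product at the sum of the corners is the product of the corner coefficients. So the
 coefficient of the determinant at the n-fold corner is det((-1)^(m+k) mu_(i+j)), that is
 (-1)^(n(m+k)) H(n). Only H(n) \<noteq> 0 is used, and nothing about the characteristic.\<close>

lemma finite_pointwise_le:
  fixes \<alpha> :: "'v \<Rightarrow>\<^sub>0 nat"
  shows "finite {\<beta>. \<forall>v. Poly_Mapping.lookup \<beta> v \<le> Poly_Mapping.lookup \<alpha> v}"
proof -
  let ?S = "{\<beta>. \<forall>v. Poly_Mapping.lookup \<beta> v \<le> Poly_Mapping.lookup \<alpha> v}"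
  let ?K = "Poly_Mapping.keys \<alpha>"
  let ?F = "{f. \<forall>v. (v \<in> ?K \<longrightarrow> f v \<in> (\<Union>w\<in>?K. {..Poly_Mapping.lookup \<alpha> w}))
      \<and> (v \<notin> ?K \<longrightarrow> f v = 0)}"
  have "Poly_Mapping.lookup ` ?S \<subseteq> ?F"
  proof clarify
    fix \<beta> v assume "\<forall>v. Poly_Mapping.lookup \<beta> v \<le> Poly_Mapping.lookup \<alpha> v"
    then show "(v \<in> ?K \<longrightarrow> Poly_Mapping.lookup \<beta> v \<in> (\<Union>w\<in>?K. {..Poly_Mapping.lookup \<alpha> w}))
        \<and> (v \<notin> ?K \<longrightarrow> Poly_Mapping.lookup \<beta> v = 0)"
      by (auto simp: in_keys_iff dest: spec[of _ v])
  qed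
  moreover have "finite ?F"
    by (intro finite_set_of_finite_funs) simp_all
  ultimately have "finite (Poly_Mapping.lookup ` ?S)"
    by (rule finite_subset)
  then show ?thesis
    by (rule finite_imageD) (simp add: inj_on_def lookup_inject)
qed

lemma finite_add_decompositions:
  fixes \<alpha> :: "'v \<Rightarrow>\<^sub>0 nat"
  shows "finite {(\<beta>, \<gamma>). \<beta> + \<gamma> = \<alpha>}"
proof -
  let ?D = "{(\<beta>, \<gamma>). \<beta> + \<gamma> = \<alpha>}"
  have "fst ` ?D \<subseteq> {\<beta>. \<forall>v. Poly_Mapping.lookup \<beta> v \<le> Poly_Mapping.lookup \<alpha> v}"
    by (auto simp: lookup_add)
  then have "finite (fst ` ?D)"
    using finite_pointwise_le finite_subset by blast
  then show ?thesis
    by (rule finite_imageD) (auto simp: inj_on_def)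
qed

definition mixed_le :: "('b + 'c \<Rightarrow>\<^sub>0 nat) \<Rightarrow> ('b + 'c \<Rightarrow>\<^sub>0 nat) \<Rightarrow> bool" where
  "mixed_le \<beta> c \<longleftrightarrow> (\<forall>l. Poly_Mapping.lookup \<beta> (Inl l) \<le> Poly_Mapping.lookup c (Inl l))
      \<and> (\<forall>l. Poly_Mapping.lookup c (Inr l) \<le> Poly_Mapping.lookup \<beta> (Inr l))"

lemma mixed_le_add: "mixed_le \<beta> c \<Longrightarrow> mixed_le \<gamma> d \<Longrightarrow> mixed_le (\<beta> + \<gamma>) (c + d)"
  by (auto simp: mixed_le_def lookup_add add_mono)

lemma mixed_le_add_eqD:
  assumes "mixed_le \<beta> c" "mixed_le \<gamma> d" "\<beta> + \<gamma> = c + d"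
  shows "\<beta> = c" "\<gamma> = d"
proof -
  have "Poly_Mapping.lookup \<beta> v = Poly_Mapping.lookup c v
      \<and> Poly_Mapping.lookup \<gamma> v = Poly_Mapping.lookup d v" for v
  proof -
    have "Poly_Mapping.lookup \<beta> v + Poly_Mapping.lookup \<gamma> v
        = Poly_Mapping.lookup c v + Poly_Mapping.lookup d v"
      using assms(3) by (metis lookup_add)
    moreover have "Poly_Mapping.lookup \<beta> v \<le> Poly_Mapping.lookup c v
          \<and> Poly_Mapping.lookup \<gamma> v \<le> Poly_Mapping.lookup d v
        \<or> Poly_Mapping.lookup c v \<le> Poly_Mapping.lookup \<beta> v
          \<and> Poly_Mapping.lookup d v \<le> Poly_Mapping.lookup \<gamma> v"
      using assms(1,2) by (cases v) (auto simp: mixed_le_def)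
    ultimately show ?thesis
      by linarith
  qed
  then show "\<beta> = c" "\<gamma> = d"
    by (auto intro: poly_mapping_eqI)
qed

definition mps_corner :: "('b + 'c, 'a::comm_ring_1) mps \<Rightarrow> ('b + 'c \<Rightarrow>\<^sub>0 nat) \<Rightarrow> bool" where
  "mps_corner f c \<longleftrightarrow> (\<forall>\<beta>. f \<beta> \<noteq> 0 \<longrightarrow> mixed_le \<beta> c)"

lemma mps_corner_one: "mps_corner mps_one 0"
  by (simp add: mps_corner_def mps_one_def mixed_le_def)

lemma mps_corner_comp:
  "h 0 = 0 \<Longrightarrow> mps_corner f c \<Longrightarrow> mps_corner (\<lambda>\<alpha>. h (f \<alpha>)) c"
  by (metis mps_corner_def)

lemma mps_corner_mult:
  assumes "mps_corner f c" "mps_corner g d"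
  shows "mps_corner (mps_mult f g) (c + d)"
  unfolding mps_corner_def
proof (intro allI impI)
  fix \<alpha> assume "mps_mult f g \<alpha> \<noteq> 0"
  then obtain x where "x \<in> {(\<beta>, \<gamma>). \<beta> + \<gamma> = \<alpha>}" "(\<lambda>(\<beta>, \<gamma>). f \<beta> * g \<gamma>) x \<noteq> 0"
    unfolding mps_mult_def by (rule sum.not_neutral_contains_not_neutral)
  then obtain \<beta> \<gamma> where "\<beta> + \<gamma> = \<alpha>" "f \<beta> * g \<gamma> \<noteq> 0"
    by auto
  moreover from this(2) have "f \<beta> \<noteq> 0" "g \<gamma> \<noteq> 0"
    by auto
  ultimately show "mixed_le \<alpha> (c + d)"
    using assms by (auto simp: mps_corner_def intro: mixed_le_add)
qed

lemma mps_mult_at_corner: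
  assumes "mps_corner f c" "mps_corner g d"
  shows "mps_mult f g (c + d) = f c * g d"
proof -
  have vanish: "f \<beta> * g \<gamma> = 0" if "\<beta> + \<gamma> = c + d" "(\<beta>, \<gamma>) \<noteq> (c, d)" for \<beta> \<gamma>
  proof (rule ccontr)
    assume "f \<beta> * g \<gamma> \<noteq> 0"
    then have "mixed_le \<beta> c" "mixed_le \<gamma> d"
      using assms by (metis mps_corner_def mult_not_zero)+
    then show False
      using mixed_le_add_eqD[OF _ _ that(1)] that(2) by blast
  qed
  have "mps_mult f g (c + d) = (\<Sum>(\<beta>, \<gamma>) \<in> {(c, d)}. f \<beta> * g \<gamma>)"
    unfolding mps_mult_def
  proof (rule sum.mono_neutral_right)
    show "\<forall>x \<in> {(\<beta>, \<gamma>). \<beta> + \<gamma> = c + d} - {(c, d)}.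
        (\<lambda>(\<beta>, \<gamma>). f \<beta> * g \<gamma>) x = 0"
      by (auto intro!: vanish)
  qed (simp_all add: finite_add_decompositions)
  then show ?thesis
    by simp
qed

lemma mps_corner_prod_list:
  "list_all2 mps_corner fs cs \<Longrightarrow> mps_corner (mps_prod_list fs) (sum_list cs)"
  by (induction rule: list_all2_induct)
    (simp_all add: mps_prod_list_def mps_corner_one mps_corner_mult)

lemma mps_prod_list_at_corner:
  "list_all2 mps_corner fs cs \<Longrightarrow>
    mps_prod_list fs (sum_list cs) = prod_list (map2 (\<lambda>f c. f c) fs cs)"
proof (induction rule: list_all2_induct)
  case Nil
  then show ?case
    by (simp add: mps_prod_list_def mps_one_def)
next
  case (Cons f fs c cs)
  have "mps_mult f (mps_prod_list fs) (c + sum_list cs) = f c * mps_prod_list fs (sum_list cs)"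
    using Cons.hyps by (intro mps_mult_at_corner mps_corner_prod_list)
  with Cons.IH show ?case
    by (simp add: mps_prod_list_def)
qed

lemma mps_det_at_corner:
  assumes "\<And>i j. i < n \<Longrightarrow> j < n \<Longrightarrow> mps_corner (A i j) c"
  shows "mps_det n A (sum_list (replicate n c)) = det (mat n n (\<lambda>(i, j). A i j c))"
proof -
  have "mps_prod_list (map (\<lambda>i. A i (p i)) [0..<n]) (sum_list (replicate n c))
      = (\<Prod>i = 0..<n. A i (p i) c)" if "p permutes {..<n}" for p
  proof -
    have "list_all2 mps_corner (map (\<lambda>i. A i (p i)) [0..<n]) (replicate n c)"
      using assms permutes_in_image[OF that] by (simp add: list_all2_conv_all_nth)
    then show ?thesis
      by (simp add: mps_prod_list_at_corner zip_replicate2 prod.list_conv_set_nth)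
  qed
  then show ?thesis
    unfolding mps_det_def det_def
    by (auto simp: atLeast0LessThan intro!: sum.cong prod.cong dest: permutes_in_image)
qed

lemma mps_corner_u_pow: "mps_corner (u_pow s) 0"
  by (simp add: mps_corner_def u_pow_def mixed_le_def)

lemma mps_corner_x_factor: "mps_corner (x_factor l) (Poly_Mapping.single (Inl l) 1)"
  by (auto simp: mps_corner_def x_factor_def mixed_le_def lookup_single when_def)

lemma mps_corner_y_factor: "mps_corner (y_factor l) (Poly_Mapping.single (Inr l) 1)"
  by (auto simp: mps_corner_def y_factor_def mixed_le_def lookup_single when_def)

lemma x_factor_at_corner: "x_factor l (Poly_Mapping.single (Inl l) 1) = -1"
proof -
  have "Poly_Mapping.single (Inl l :: nat + nat) (1::nat) \<noteq> 0"
    by (metis lookup_single_eq lookup_zero one_neq_zero)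
  then show ?thesis
    by (simp add: x_factor_def)
qed

lemma y_factor_at_corner: "y_factor l (Poly_Mapping.single (Inr l) 1) = -1"
  by (auto simp: y_factor_def monom_0 one_pCons)

lemma Lfun_zero: "Lfun \<mu> 0 = 0"
  by (simp add: Lfun_def)

lemma Lfun_monom: "Lfun \<mu> (monom a s) = a * \<mu> s"
proof (cases "a = 0")
  case False
  then have "Lfun \<mu> (monom a s) = (\<Sum>t\<le>s. if s = t then a * \<mu> t else 0)"
    unfolding Lfun_def by (intro sum.cong) (simp_all add: degree_monom_eq coeff_monom)
  then show ?thesis
    by simp
qed (simp add: Lfun_def)

definition xy_corner :: "nat \<Rightarrow> nat \<Rightarrow> (nat + nat \<Rightarrow>\<^sub>0 nat)" where
  "xy_corner m k = sum_list (map (\<lambda>l. Poly_Mapping.single (Inl l) 1) [0..<m]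
      @ map (\<lambda>l. Poly_Mapping.single (Inr l) 1) [0..<k])"

lemma entry_corner:
  fixes \<mu> :: "nat \<Rightarrow> 'a::comm_ring_1"
  shows "mps_corner (entry \<mu> m k i j) (xy_corner m k)"
    and "entry \<mu> m k i j (xy_corner m k) = (-1) ^ (m + k) * \<mu> (i + j)"
proof -
  let ?fs = "[u_pow (i + j)] @ map x_factor [0..<m] @ map y_factor [0..<k]
    :: (nat + nat, 'a poly) mps list"
  let ?cs = "[0] @ map (\<lambda>l. Poly_Mapping.single (Inl l) 1) [0..<m]
      @ map (\<lambda>l. Poly_Mapping.single (Inr l) 1) [0..<k]"
  have corners: "list_all2 mps_corner ?fs ?cs"
    by (intro list_all2_appendI)
      (simp_all only: list_all2_map1 list_all2_map2 list_all2_refl list_all2_Cons list_all2_Nil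
        mps_corner_u_pow mps_corner_x_factor mps_corner_y_factor simp_thms)
  have "sum_list ?cs = xy_corner m k"
    by (simp add: xy_corner_def)
  then have "mps_corner (mps_prod_list ?fs) (xy_corner m k)"
    using mps_corner_prod_list[OF corners] by simp
  then show "mps_corner (entry \<mu> m k i j) (xy_corner m k)"
    unfolding entry_def by (rule mps_corner_comp[where h = "Lfun \<mu>", OF Lfun_zero])
  have "mps_prod_list ?fs (xy_corner m k) = monom 1 (i + j) * (-1) ^ m * (-1) ^ k"
    using mps_prod_list_at_corner[OF corners]
    by (simp add: xy_corner_def zip_map1 zip_map2 zip_same_conv_map o_def u_pow_def
        x_factor_at_corner[simplified] y_factor_at_corner[simplified] map_replicate_const mult.assoc)
  also have "\<dots> = monom ((-1) ^ (m + k)) (i + j)"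
  proof -
    have "(-1 :: 'a poly) ^ q = monom ((-1) ^ q) 0" for q
      by (simp add: monom_0 one_pCons poly_const_pow)
    then show ?thesis
      by (simp add: mult_monom power_add)
  qed
  finally show "entry \<mu> m k i j (xy_corner m k) = (-1) ^ (m + k) * \<mu> (i + j)"
    by (simp add: entry_def Lfun_monom)
qed

theorem lemma10:
  fixes \<mu> :: "nat \<Rightarrow> 'a::field_char_0" and k m n :: nat
  assumes "\<forall>N. hankel \<mu> N \<noteq> 0"
  shows "mps_det n (entry \<mu> m k) \<noteq> (\<lambda>_. 0)"
proof
  assume "mps_det n (entry \<mu> m k) = (\<lambda>_. 0)"
  then have "0 = mps_det n (entry \<mu> m k) (sum_list (replicate n (xy_corner m k)))"
    by simp
  also have "\<dots> = det (mat n n (\<lambda>(i, j). (-1) ^ (m + k) * \<mu> (i + j)))"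
    by (simp add: mps_det_at_corner entry_corner)
  also have "mat n n (\<lambda>(i, j). (-1) ^ (m + k) * \<mu> (i + j))
      = (-1) ^ (m + k) \<cdot>\<^sub>m mat n n (\<lambda>(i, j). \<mu> (i + j))"
    by auto
  also have "det \<dots> = ((-1) ^ (m + k)) ^ n * hankel \<mu> n"
    by (simp add: hankel_def)
  finally show False
    using assms by simp
qed

end
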